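(* For any set $\mathscr X$ disjoint from $\tau$, the $\bar\tau$-algebra $\mathcal N_{\bar\tau}(\mathscr X)$ is an infinitary clone $\tau$-algebra, and it is the free infinitary clone $\tau$-algebra over the set $\dot{\mathscr X}=\{\dot x: x\in\mathscr X\}$ of generators: for every infinitary clone $\tau$-algebra $\mathcal C$ and every function $\alpha:\dot{\mathscr X}\to C$ there is a unique homomorphism $\mathcal N_{\bar\tau}(\mathscr X)\to\mathcal C$ extending $\alpha$. In particular, $\mathcal N_{\bar\tau}=\mathcal N_{\bar\tau}(\emptyset)$ is initial among infinitary clone $\tau$-algebras.
   Context: $\tau$ is a set of $\omega$-ary operation symbols disjoint from $\{q\}\cup\{e_i:i\in\omega\}$. $\bar\tau$ is the type with nullary $e_i$ ($i\in\omega$), nullary $f$ for each $f\in\tau$, and $\omega$-ary $q$. An infinitary clone $\tau$-algebra is a $\bar\tau$-algebra satisfying (N1) $q(e_i,x_0,x_1,\dots)=x_i$; (N2) $q(x,e_0,e_1,\dots)=x$; (N3) $q(q(x,y_0,y_1,\dots),\boldsymbol z)=q(x,q(y_0,\boldsymbol z),q(y_1,\boldsymbol z),\dots)$. Metaterms: $N_{\bar\tau}(\mathscr X)$ is the smallest set containing the symbols $e_0,e_1,\dots$ and containing $w(t_0,t_1,\dots)$ whenever $w\in\tau\cup\mathscr X$ and $t_0,t_1,\dots\in N_{\bar\tau}(\mathscr X)$ (well-founded countably branching terms, every symbol of $\tau\cup\mathscr X$ being treated as $\omega$-ary). $\mathcal N_{\bar\tau}(\mathscr X)$ is the $\bar\tau$-algebra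 on $N_{\bar\tau}(\mathscr X)$ with $e_i\mapsto e_i$, $f\mapsto f(e_0,e_1,\dots)$ for $f\in\tau$, and $q$ defined by recursion on the first argument: $q(e_i,t_0,t_1,\dots)=t_i$ and $q(w(t_0,t_1,\dots),\boldsymbol u)=w(q(t_0,\boldsymbol u),q(t_1,\boldsymbol u),\dots)$ for $w\in\tau\cup\mathscr X$. For $x\in\mathscr X$, $\dot x=x(e_0,e_1,\dots)$. *)

theory Defs
  imports Main
begin

text \<open>A node is labelled by a
symbol of \<tau> (type 'f, tag Inl) or of \<X> (type 'x, tag Inr); the sum type makes
\<tau> and \<X> disjoint.  Leaves are the symbols e_i.\<close>

datatype ('f, 'x) mterm = Ev nat | App "'f + 'x" "nat \<Rightarrow> ('f, 'x) mterm"

primrec mt_ok :: "'f set \<Rightarrow> 'x set \<Rightarrow> ('f, 'x) mterm \<Rightarrow> bool" where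
  "mt_ok T X (Ev i) = True"
| "mt_ok T X (App w ts) = (w \<in> Inl ` T \<union> Inr ` X \<and> (\<forall>i. mt_ok T X (ts i)))"

primrec mt_q :: "('f, 'x) mterm \<Rightarrow> (nat \<Rightarrow> ('f, 'x) mterm) \<Rightarrow> ('f, 'x) mterm" where
  "mt_q (Ev i) u = u i"
| "mt_q (App w ts) u = App w (\<lambda>i. mt_q (ts i) u)"

record ('a, 'f) tbar_alg =
  acar :: "'a set"
  ae :: "nat \<Rightarrow> 'a"
  aconst :: "'f \<Rightarrow> 'a"
  aq :: "'a \<Rightarrow> (nat \<Rightarrow> 'a) \<Rightarrow> 'a"

definition tbar_algebra :: "'f set \<Rightarrow> ('a, 'f) tbar_alg \<Rightarrow> bool" where
  "tbar_algebra T A \<longleftrightarrow>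
     (\<forall>i. ae A i \<in> acar A) \<and> (\<forall>f\<in>T. aconst A f \<in> acar A) \<and>
     (\<forall>x\<in>acar A. \<forall>ys. (\<forall>i. ys i \<in> acar A) \<longrightarrow> aq A x ys \<in> acar A)"

definition inf_clone_alg :: "'f set \<Rightarrow> ('a, 'f) tbar_alg \<Rightarrow> bool" where
  "inf_clone_alg T A \<longleftrightarrow> tbar_algebra T A \<and>
     (\<forall>i xs. (\<forall>j. xs j \<in> acar A) \<longrightarrow> aq A (ae A i) xs = xs i) \<and>
     (\<forall>x\<in>acar A. aq A x (ae A) = x) \<and>
     (\<forall>x\<in>acar A. \<forall>ys zs. (\<forall>i. ys i \<in> acar A) \<longrightarrow> (\<forall>i. zs i \<in> acar A) \<longrightarrow>
        aq A (aq A x ys) zs = aq A x (\<lambda>i. aq A (ys i) zs))"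

definition tbar_hom :: "'f set \<Rightarrow> ('a, 'f) tbar_alg \<Rightarrow> ('b, 'f) tbar_alg \<Rightarrow> ('a \<Rightarrow> 'b) \<Rightarrow> bool" where
  "tbar_hom T A B h \<longleftrightarrow>
     (\<forall>x\<in>acar A. h x \<in> acar B) \<and>
     (\<forall>i. h (ae A i) = ae B i) \<and>
     (\<forall>f\<in>T. h (aconst A f) = aconst B f) \<and>
     (\<forall>x\<in>acar A. \<forall>ys. (\<forall>i. ys i \<in> acar A) \<longrightarrow> h (aq A x ys) = aq B (h x) (\<lambda>i. h (ys i)))"

definition NX :: "'f set \<Rightarrow> 'x set \<Rightarrow> (('f, 'x) mterm, 'f) tbar_alg" where
  "NX T X = \<lparr> acar = {t. mt_ok T X t}, ae = Ev, aconst = (\<lambda>f. App (Inl f) Ev), aq = mt_q \<rparr>"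

definition dotx :: "'x \<Rightarrow> ('f, 'x) mterm" where
  "dotx x = App (Inr x) Ev"

end

theory Submission
  imports Defs
begin

text \<open>Substitution in metaterms is associative with the e_i as unit, so N(X) is a clone algebra.
  The extension of \<alpha> evaluates a metaterm node w(t_0, t_1, \<dots>) as q(w, t_0, t_1, \<dots>) in C,
  reading w as a constant of C or as the \<alpha>-image of a generator; axioms (N1) and (N3) of C make
  this a homomorphism.  Uniqueness holds because in N(X) every node is a substitution instance
  w(t_0, t_1, \<dots>) = q(w(e_0, e_1, \<dots>), t_0, t_1, \<dots>) of a constant or a generator.\<close>

lemma mt_ok_mt_q: "mt_ok T X t \<Longrightarrow> (\<And>i. mt_ok T X (u i)) \<Longrightarrow> mt_ok T X (mt_q t u)"
  by (induction t) auto

lemma mt_q_Ev_right [simp]: "mt_q t Ev = t"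
  by (induction t) auto

lemma mt_q_assoc: "mt_q (mt_q t ys) zs = mt_q t (\<lambda>i. mt_q (ys i) zs)"
  by (induction t) auto

lemma inf_clone_alg_NX: "inf_clone_alg T (NX T X)"
  by (auto simp: inf_clone_alg_def tbar_algebra_def NX_def mt_ok_mt_q mt_q_assoc)

definition symbol_val :: "('a, 'f) tbar_alg \<Rightarrow> ('x \<Rightarrow> 'a) \<Rightarrow> 'f + 'x \<Rightarrow> 'a" where
  "symbol_val C g w = (case w of Inl f \<Rightarrow> aconst C f | Inr x \<Rightarrow> g x)"

primrec mt_eval :: "('a, 'f) tbar_alg \<Rightarrow> ('x \<Rightarrow> 'a) \<Rightarrow> ('f, 'x) mterm \<Rightarrow> 'a" where
  "mt_eval C g (Ev i) = ae C i"
| "mt_eval C g (App w ts) = aq C (symbol_val C g w) (\<lambda>i. mt_eval C g (ts i))"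

lemma symbol_val_in_carrier:
  assumes "tbar_algebra T C" and "g ` X \<subseteq> acar C" and "w \<in> Inl ` T \<union> Inr ` X"
  shows "symbol_val C g w \<in> acar C"
  using assms by (auto simp: symbol_val_def tbar_algebra_def)

lemma mt_eval_in_carrier:
  assumes C: "tbar_algebra T C" and g: "g ` X \<subseteq> acar C"
  shows "mt_ok T X t \<Longrightarrow> mt_eval C g t \<in> acar C"
proof (induction t)
  case (Ev i)
  then show ?case using C by (simp add: tbar_algebra_def)
next
  case (App w ts)
  then have "symbol_val C g w \<in> acar C" and "\<forall>i. mt_eval C g (ts i) \<in> acar C"
    using symbol_val_in_carrier[OF C g] by auto
  then show ?case using C by (simp add: tbar_algebra_def)
qed

lemma mt_eval_mt_q:
  assumes C: "inf_clone_alg T C" and g: "g ` X \<subseteq> acar C"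
    and t: "mt_ok T X t" and u: "\<And>i. mt_ok T X (u i)"
  shows "mt_eval C g (mt_q t u) = aq C (mt_eval C g t) (\<lambda>i. mt_eval C g (u i))"
proof -
  have CT: "tbar_algebra T C" using C by (simp add: inf_clone_alg_def)
  have u_car: "\<forall>i. mt_eval C g (u i) \<in> acar C"
    using mt_eval_in_carrier[OF CT g] u by auto
  from t show ?thesis
  proof (induction t)
    case (Ev i)
    then show ?case using C u_car by (simp add: inf_clone_alg_def)
  next
    case (App w ts)
    define s where "s = symbol_val C g w"
    have s: "s \<in> acar C" and ts: "\<forall>i. mt_eval C g (ts i) \<in> acar C"
      using App.prems symbol_val_in_carrier[OF CT g] mt_eval_in_carrier[OF CT g]
      by (auto simp: s_def)
    have "mt_eval C g (mt_q (App w ts) u)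
        = aq C s (\<lambda>i. aq C (mt_eval C g (ts i)) (\<lambda>j. mt_eval C g (u j)))"
      using App by (simp add: s_def)
    also have "\<dots> = aq C (aq C s (\<lambda>i. mt_eval C g (ts i))) (\<lambda>j. mt_eval C g (u j))"
      using C s ts u_car by (simp add: inf_clone_alg_def)
    finally show ?case by (simp add: s_def)
  qed
qed

lemma tbar_hom_mt_eval:
  assumes C: "inf_clone_alg T C" and g: "g ` X \<subseteq> acar C"
  shows "tbar_hom T (NX T X) C (mt_eval C g)"
proof -
  have CT: "tbar_algebra T C" using C by (simp add: inf_clone_alg_def)
  have "mt_eval C g (App (Inl f) Ev) = aconst C f" if "f \<in> T" for f
    using C that by (simp add: symbol_val_def inf_clone_alg_def tbar_algebra_def)
  then show ?thesis
    by (auto simp: tbar_hom_def NX_def mt_eval_in_carrier[OF CT g] mt_eval_mt_q[OF C g])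
qed

lemma mt_eval_dotx:
  assumes "inf_clone_alg T C" and "g x \<in> acar C"
  shows "mt_eval C g (dotx x) = g x"
  using assms by (simp add: dotx_def symbol_val_def inf_clone_alg_def)

lemma tbar_hom_NX_unique:
  assumes h: "tbar_hom T (NX T X) C h" and gen: "\<And>x. x \<in> X \<Longrightarrow> h (dotx x) = g x"
  shows "mt_ok T X t \<Longrightarrow> h t = mt_eval C g t"
proof (induction t)
  case (Ev i)
  then show ?case using h by (simp add: tbar_hom_def NX_def)
next
  case (App w ts)
  have ok: "mt_ok T X (App w Ev)" "\<And>i. mt_ok T X (ts i)" using App.prems by auto
  have head: "h (App w Ev) = symbol_val C g w"
    using App.prems h gen by (auto simp: tbar_hom_def NX_def dotx_def symbol_val_def)
  have "h (mt_q (App w Ev) ts) = aq C (h (App w Ev)) (\<lambda>i. h (ts i))"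
    using h ok by (auto simp: tbar_hom_def NX_def simp del: mt_q.simps)
  then show ?case using App ok head by simp
qed

theorem proposition4p3:
  fixes T :: "'f set" and X :: "'x set"
  shows "inf_clone_alg T (NX T X) \<and>
    (\<forall>(C :: ('a, 'f) tbar_alg) (\<alpha> :: ('f, 'x) mterm \<Rightarrow> 'a).
       inf_clone_alg T C \<longrightarrow> \<alpha> ` (dotx ` X) \<subseteq> acar C \<longrightarrow>
       (\<exists>h. tbar_hom T (NX T X) C h \<and> (\<forall>x\<in>X. h (dotx x) = \<alpha> (dotx x)) \<and>
            (\<forall>h'. tbar_hom T (NX T X) C h' \<and> (\<forall>x\<in>X. h' (dotx x) = \<alpha> (dotx x)) \<longrightarrow>
                  (\<forall>t\<in>acar (NX T X). h' t = h t))))"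
proof (intro conjI allI impI inf_clone_alg_NX)
  fix C :: "('a, 'f) tbar_alg" and \<alpha> :: "('f, 'x) mterm \<Rightarrow> 'a"
  assume C: "inf_clone_alg T C" and \<alpha>: "\<alpha> ` (dotx ` X) \<subseteq> acar C"
  define g where "g x = \<alpha> (dotx x)" for x
  have g: "g ` X \<subseteq> acar C" using \<alpha> by (auto simp: g_def)
  show "\<exists>h. tbar_hom T (NX T X) C h \<and> (\<forall>x\<in>X. h (dotx x) = \<alpha> (dotx x)) \<and>
            (\<forall>h'. tbar_hom T (NX T X) C h' \<and> (\<forall>x\<in>X. h' (dotx x) = \<alpha> (dotx x)) \<longrightarrow>
                  (\<forall>t\<in>acar (NX T X). h' t = h t))"
  proof (intro exI conjI ballI allI impI)
    show "tbar_hom T (NX T X) C (mt_eval C g)" by (rule tbar_hom_mt_eval[OF C g])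
    show "mt_eval C g (dotx x) = \<alpha> (dotx x)" if "x \<in> X" for x
      using mt_eval_dotx[OF C, of g x] g that by (auto simp: g_def)
    show "h' t = mt_eval C g t"
      if "tbar_hom T (NX T X) C h' \<and> (\<forall>x\<in>X. h' (dotx x) = \<alpha> (dotx x))"
        and "t \<in> acar (NX T X)" for h' t
      using that tbar_hom_NX_unique[of T X C h' g t] by (auto simp: g_def NX_def)
  qed
qed

end
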